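(* Let $\kappa$ be a field, $r\ge1$, $\mathbf{s}=(s_1,\dots,s_d)$ nonnegative integers with sum $r$, $w\in S_{r,\mathbf{s}}$ and $u\in U_w$. Let $H_{\mathbf{s}}:=P_{\mathbf{s}}\times T$ act on $\mathrm{GL}_r(\kappa)$ by $(p,t)\cdot g=pgt^{-1}$. Then the stabilizer of $wu$ in $H_{\mathbf{s}}$ is isomorphic to $$C_T(u)=\{t\in T: tut^{-1}=u\}=\bigcap_{\{\alpha\in R^+\,:\,w\cdot\alpha\in R^-\smallsetminus R_{\mathbf{s}},\ u_\alpha\neq1\}}\mathrm{Ker}\,\alpha.$$
   Context: $T\cong(\kappa^\times)^r$ is the diagonal torus of $\mathrm{GL}_r$. Partition $\{1,\dots,r\}$ into consecutive blocks of sizes $s_d,\dots,s_1$ from $1$ upward; $P_{\mathbf{s}}$ is the block lower triangular subgroup, $L_{\mathbf{s}}$ its block diagonal Levi factor. Permutations $w$ are identified with matrices $a(w)_{ij}=\delta_{i,w(j)}$; $S_{r,\mathbf{s}}$ is the set of $w$ with $w^{-1}(a)<w^{-1}(b)$ whenever $a<b$ are in the same block. Roots: $\alpha_{i,j}(t_1,\dots,t_r)=t_i/t_j$ for $i\ne j$; $R$ is the set of these, $R^+=\{\alpha_{i,j}:j<i\}$, $R^-=R\smallsetminus R^+$, $w\cdot\alpha_{i,j}=\alpha_{w(i),w(j)}$; $U_{\alpha_{i,j}}=\{I+xE_{i,j}:x\in\kappa\}$; $R_{\mathbf{s}}$ is the set of roots $\alpha$ with $U_\alpha\subset L_{\mathbf{s}}$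 (i.e. $\alpha_{i,j}$ with $i,j$ in the same block). $U_w$ is the group of lower unitriangular matrices whose off-diagonal entry $(i,j)$ vanishes unless $j<i$ and $w(i)<w(j)$. For $u\in U_w$ and $\alpha=\alpha_{i,j}$ with $U_\alpha\subset U_w$, $u_\alpha:=I+u_{ij}E_{i,j}$ is the component of $u$ in $U_\alpha$; so $u_\alpha\ne1$ means $u_{ij}\neq0$. *)

theory Defs
  imports "Jordan_Normal_Form.Matrix" "HOL-Combinatorics.Permutations" "HOL-Algebra.Group"
begin

text \<open>Indices are 0-based: position i (0..r-1) corresponds to i+1 in the paper.
 s = [s_1,...,s_d]; the blocks, from index 0 upward, have sizes s_d, ..., s_1.
 blk s i is the number of the block containing position i (counted from 0 upward).\<close>

definition psum :: "nat list \<Rightarrow> nat \<Rightarrow> nat" where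
  "psum s k = sum_list (take k (rev s))"

definition blk :: "nat list \<Rightarrow> nat \<Rightarrow> nat" where
  "blk s i = card {k \<in> {1..length s}. psum s k \<le> i}"

definition Pgrp :: "nat \<Rightarrow> nat list \<Rightarrow> 'a::field mat set" where
  "Pgrp r s = {p \<in> carrier_mat r r. invertible_mat p \<and>
      (\<forall>i<r. \<forall>j<r. blk s i < blk s j \<longrightarrow> p $$ (i,j) = 0)}"

definition Tor :: "nat \<Rightarrow> 'a::field mat set" where
  "Tor r = {t \<in> carrier_mat r r. diagonal_mat t \<and> (\<forall>i<r. t $$ (i,i) \<noteq> 0)}"

definition diag_inv :: "nat \<Rightarrow> 'a::field mat \<Rightarrow> 'a mat" where
  "diag_inv r t = mat r r (\<lambda>(i,j). if i = j then inverse (t $$ (i,i)) else 0)"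

definition perm_mat :: "nat \<Rightarrow> (nat \<Rightarrow> nat) \<Rightarrow> 'a::field mat" where
  "perm_mat r w = mat r r (\<lambda>(i,j). if i = w j then 1 else 0)"

definition S_rs :: "nat \<Rightarrow> nat list \<Rightarrow> (nat \<Rightarrow> nat) set" where
  "S_rs r s = {w. w permutes {..<r} \<and>
      (\<forall>a<r. \<forall>b<r. a < b \<and> blk s a = blk s b \<longrightarrow> Hilbert_Choice.inv w a < Hilbert_Choice.inv w b)}"

definition U_w :: "nat \<Rightarrow> (nat \<Rightarrow> nat) \<Rightarrow> 'a::field mat set" where
  "U_w r w = {u \<in> carrier_mat r r. (\<forall>i<r. u $$ (i,i) = 1) \<and>
      (\<forall>i<r. \<forall>j<r. i \<noteq> j \<longrightarrow> \<not> (j < i \<and> w i < w j) \<longrightarrow> u $$ (i,j) = 0)}"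

definition root_val :: "nat \<Rightarrow> nat \<Rightarrow> 'a::field mat \<Rightarrow> 'a" where
  "root_val i j t = t $$ (i,i) / t $$ (j,j)"

definition stab_group :: "nat \<Rightarrow> nat list \<Rightarrow> 'a::field mat \<Rightarrow> ('a mat \<times> 'a mat) monoid" where
  "stab_group r s g = \<lparr> carrier = {(p,t). p \<in> Pgrp r s \<and> t \<in> Tor r \<and> p * g * diag_inv r t = g},
      mult = (\<lambda>(p,t) (p',t'). (p * p', t * t')), one = (1\<^sub>m r, 1\<^sub>m r) \<rparr>"

definition CT_set :: "nat \<Rightarrow> 'a::field mat \<Rightarrow> 'a mat set" where
  "CT_set r u = {t \<in> Tor r. t * u * diag_inv r t = u}"

definition CT_group :: "nat \<Rightarrow> 'a::field mat \<Rightarrow> 'a mat monoid" where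
  "CT_group r u = \<lparr> carrier = CT_set r u, mult = (*), one = 1\<^sub>m r \<rparr>"

end

theory Submission
  imports Defs
begin

(* Write g = a(w) u. An element (p, t) of H_s fixes g iff X u = u t for X = a(w)^-1 p a(w).
   Because w lies in S_{r,s}, every nonzero strictly lower entry u_ij of u sits at a position
   with blk(w i) < blk(w j), where X vanishes since p is block lower triangular. Solving
   X u = u t column by column from the right, using that u is unitriangular, then forces X = t.
   So p = a(w) t a(w)^-1 is determined by t, and t commutes with u; conversely every t in C_T(u)
   arises this way, and (p, t) |-> t is the isomorphism. Finally t commutes with u iff
   t_i = t_j whenever u_ij is nonzero, and the off-diagonal such (i, j) are exactly the roots
   of the stated index set. *)

lemma TorE:
  assumes "t \<in> Tor r"
  obtains d where "t = mat_diag r d" and "\<forall>i<r. d i \<noteq> 0"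
proof
  show "t = mat_diag r (\<lambda>i. t $$ (i,i))"
    using assms by (intro eq_matI) (auto simp: Tor_def mat_diag_def diagonal_mat_def)
  show "\<forall>i<r. t $$ (i,i) \<noteq> 0" using assms by (simp add: Tor_def)
qed

lemma diag_inv_mat_diag: "diag_inv r (mat_diag r d) = mat_diag r (\<lambda>i. inverse (d i))"
  by (intro eq_matI) (auto simp: diag_inv_def mat_diag_def)

lemma Tor_carrier: "t \<in> Tor r \<Longrightarrow> t \<in> carrier_mat r r"
  by (simp add: Tor_def)

lemma Tor_mult_diag_inv:
  assumes "t \<in> Tor r"
  shows "t * diag_inv r t = 1\<^sub>m r" and "diag_inv r t * t = 1\<^sub>m r"
proof -
  obtain d where t: "t = mat_diag r d" and d: "\<forall>i<r. d i \<noteq> 0"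
    using TorE[OF assms] .
  have "mat_diag r (\<lambda>i. d i * inverse (d i)) = 1\<^sub>m r"
    and "mat_diag r (\<lambda>i. inverse (d i) * d i) = 1\<^sub>m r"
    using d by (auto intro!: eq_matI simp: mat_diag_def)
  then show "t * diag_inv r t = 1\<^sub>m r" and "diag_inv r t * t = 1\<^sub>m r"
    by (simp_all add: t diag_inv_mat_diag)
qed

lemma Tor_subset_Pgrp: "Tor r \<subseteq> Pgrp r s"
proof
  fix t :: "'a mat" assume t: "t \<in> Tor r"
  then have "invertible_mat t"
    using Tor_mult_diag_inv[OF t] Tor_carrier[OF t]
    by (auto simp: invertible_mat_def inverts_mat_def diag_inv_def)
  with t show "t \<in> Pgrp r s"
    by (fastforce simp: Pgrp_def Tor_def diagonal_mat_def)
qed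

lemma mult_diag_inv_eq_iff:
  assumes t: "t \<in> Tor r" and X: "X \<in> carrier_mat n r" and M: "M \<in> carrier_mat n r"
  shows "X * diag_inv r t = M \<longleftrightarrow> X = M * t"
proof
  have tc: "t \<in> carrier_mat r r" and dc: "diag_inv r t \<in> carrier_mat r r"
    using Tor_carrier[OF t] by (auto simp: diag_inv_def)
  show "X = M * t" if "X * diag_inv r t = M"
  proof -
    have "X = X * (diag_inv r t * t)" using Tor_mult_diag_inv(2)[OF t] X by simp
    also have "\<dots> = M * t" using that X dc tc by (simp add: assoc_mult_mat[symmetric])
    finally show ?thesis .
  qed
  show "X * diag_inv r t = M" if "X = M * t"
  proof -
    have "X * diag_inv r t = M * (t * diag_inv r t)" using that M dc tc by simp
    also have "\<dots> = M" using Tor_mult_diag_inv(1)[OF t] M by simp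
    finally show ?thesis .
  qed
qed

lemma Tor_commute_iff:
  assumes t: "t \<in> Tor r" and M: "M \<in> carrier_mat r r"
  shows "t * M = M * t \<longleftrightarrow> (\<forall>i<r. \<forall>j<r. M $$ (i,j) \<noteq> 0 \<longrightarrow> t $$ (i,i) = t $$ (j,j))"
proof -
  obtain d where td: "t = mat_diag r d" using TorE[OF t] .
  have "t * M = M * t \<longleftrightarrow> (\<forall>i<r. \<forall>j<r. d i * M $$ (i,j) = M $$ (i,j) * d j)"
    using M by (auto simp: td mat_diag_mult_left mat_diag_mult_right mat_eq_iff)
  then show ?thesis using M by (auto simp: td mat_diag_def mult.commute)
qed

lemma CT_set_eq_commute:
  assumes "u \<in> carrier_mat r r"
  shows "CT_set r u = {t \<in> Tor r. t * u = u * t}"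
  using mult_diag_inv_eq_iff[OF _ mult_carrier_mat[OF Tor_carrier assms] assms]
  by (auto simp: CT_set_def)

(* perm_conj r w p = a(w)^-1 p a(w), see mult_perm_mat_eq *)
definition perm_conj :: "nat \<Rightarrow> (nat \<Rightarrow> nat) \<Rightarrow> 'a mat \<Rightarrow> 'a mat" where
  "perm_conj r w p = mat r r (\<lambda>(i,j). p $$ (w i, w j))"

lemma perm_mat_carrier [simp]: "perm_mat r w \<in> carrier_mat r r"
  by (simp add: perm_mat_def)

lemma perm_conj_carrier [simp]: "perm_conj r w p \<in> carrier_mat r r"
  by (simp add: perm_conj_def)

lemma perm_mat_mult_index:
  fixes M :: "'a::field mat"
  assumes w: "w permutes {..<r}" and M: "M \<in> carrier_mat r n" and i: "i < r" and j: "j < n"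
  shows "(perm_mat r w * M) $$ (w i, j) = M $$ (i, j)"
proof -
  have "w i < r" using permutes_in_image[OF w] i by simp
  then have "(perm_mat r w * M) $$ (w i, j) = (\<Sum>k\<in>{0..<r}. (if w i = w k then 1 else 0) * M $$ (k, j))"
    using M j by (simp add: scalar_prod_def perm_mat_def)
  also have "\<dots> = (\<Sum>k\<in>{0..<r}. if k = i then M $$ (i, j) else 0)"
    using permutes_inj[OF w] by (intro sum.cong) (auto dest: injD)
  also have "\<dots> = M $$ (i, j)" using i by simp
  finally show ?thesis .
qed

lemma mult_perm_mat_index:
  fixes M :: "'a::field mat"
  assumes w: "w permutes {..<r}" and M: "M \<in> carrier_mat n r" and a: "a < n" and k: "k < r"
  shows "(M * perm_mat r w) $$ (a, k) = M $$ (a, w k)"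
proof -
  have wk: "w k < r" using permutes_in_image[OF w] k by simp
  have "(M * perm_mat r w) $$ (a, k) = (\<Sum>b\<in>{0..<r}. M $$ (a, b) * (if b = w k then 1 else 0))"
    using M a k by (simp add: scalar_prod_def perm_mat_def)
  also have "\<dots> = M $$ (a, w k)" using wk by (simp add: if_distrib cong: if_cong)
  finally show ?thesis .
qed

lemma perm_mat_mult_cancel:
  fixes M N :: "'a::field mat"
  assumes w: "w permutes {..<r}" and M: "M \<in> carrier_mat r n" and N: "N \<in> carrier_mat r n"
    and eq: "perm_mat r w * M = perm_mat r w * N"
  shows "M = N"
proof (rule eq_matI)
  fix i j assume "i < dim_row N" "j < dim_col N"
  then show "M $$ (i, j) = N $$ (i, j)"
    using perm_mat_mult_index[OF w M] perm_mat_mult_index[OF w N] eq N by fastforce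
qed (use M N in auto)

lemma mult_perm_mat_eq:
  fixes p :: "'a::field mat"
  assumes w: "w permutes {..<r}" and p: "p \<in> carrier_mat r r"
  shows "p * perm_mat r w = perm_mat r w * perm_conj r w p"
proof (rule eq_matI)
  fix a k
  assume "a < dim_row (perm_mat r w * perm_conj r w p)"
    and "k < dim_col (perm_mat r w * perm_conj r w p)"
  then have a: "a < r" and k: "k < r" by (simp_all add: perm_mat_def perm_conj_def)
  define i where "i = Hilbert_Choice.inv w a"
  have i: "i < r" and a_eq: "a = w i"
    using a permutes_in_image[OF permutes_inv[OF w], of a] permutes_inverses(1)[OF w]
    by (auto simp: i_def)
  have "(perm_mat r w * perm_conj r w p) $$ (a, k) = perm_conj r w p $$ (i, k)"
    using perm_mat_mult_index[OF w perm_conj_carrier i k] by (simp add: a_eq)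
  also have "\<dots> = (p * perm_mat r w) $$ (a, k)"
    using mult_perm_mat_index[OF w p a k] i k by (simp add: perm_conj_def a_eq)
  finally show "(p * perm_mat r w) $$ (a, k) = (perm_mat r w * perm_conj r w p) $$ (a, k)" ..
qed (use p in \<open>simp_all add: perm_mat_def perm_conj_def\<close>)

lemma perm_conj_inv:
  assumes w: "w permutes {..<r}" and p: "p \<in> carrier_mat r r"
  shows "perm_conj r w (perm_conj r (Hilbert_Choice.inv w) p) = p"
    and "perm_conj r (Hilbert_Choice.inv w) (perm_conj r w p) = p"
  using p permutes_inverses[OF w] permutes_in_image[OF w] permutes_in_image[OF permutes_inv[OF w]]
  by (auto intro!: eq_matI simp: perm_conj_def)

lemma perm_conj_Tor:
  assumes w: "w permutes {..<r}" and t: "t \<in> Tor r"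
  shows "perm_conj r w t \<in> Tor r"
  using t permutes_in_image[OF w]
  by (auto simp: Tor_def perm_conj_def diagonal_mat_def inj_eq[OF permutes_inj[OF w]])

lemma perm_mat_stabilizer_iff:
  fixes p u t :: "'a::field mat"
  assumes w: "w permutes {..<r}"
    and p: "p \<in> carrier_mat r r" and u: "u \<in> carrier_mat r r" and t: "t \<in> carrier_mat r r"
  shows "p * (perm_mat r w * u) = perm_mat r w * u * t \<longleftrightarrow> perm_conj r w p * u = u * t"
proof -
  have "p * (perm_mat r w * u) = p * perm_mat r w * u"
    using assoc_mult_mat[OF p perm_mat_carrier u] by simp
  also have "\<dots> = perm_mat r w * (perm_conj r w p * u)"
    using mult_perm_mat_eq[OF w p] assoc_mult_mat[OF perm_mat_carrier perm_conj_carrier u] by simp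
  finally have "p * (perm_mat r w * u) = perm_mat r w * (perm_conj r w p * u)" .
  moreover have "perm_mat r w * u * t = perm_mat r w * (u * t)"
    using assoc_mult_mat[OF perm_mat_carrier u t] .
  ultimately show ?thesis
    using perm_mat_mult_cancel[OF w mult_carrier_mat[OF perm_conj_carrier u] mult_carrier_mat[OF u t]]
    by auto
qed

lemma blk_mono: "a \<le> b \<Longrightarrow> blk s a \<le> blk s b"
  unfolding blk_def by (rule card_mono) auto

lemma S_rs_blk_less:
  assumes w: "w \<in> S_rs r s" and ij: "i < r" "j < r" "j < i" "w i < w j"
  shows "blk s (w i) < blk s (w j)"
proof -
  have wp: "w permutes {..<r}" using w by (simp add: S_rs_def)
  have "blk s (w i) \<noteq> blk s (w j)"
  proof
    assume "blk s (w i) = blk s (w j)"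
    then have "Hilbert_Choice.inv w (w i) < Hilbert_Choice.inv w (w j)"
      using w ij permutes_in_image[OF wp] by (auto simp: S_rs_def)
    then show False using ij permutes_inverses(2)[OF wp] by simp
  qed
  then show ?thesis using blk_mono[of "w i" "w j" s] ij(4) by simp
qed

lemma perm_conj_Pgrp_vanishes:
  assumes w: "w \<in> S_rs r s" and p: "p \<in> Pgrp r s" and ij: "i < r" "j < r" "j < i" "w i < w j"
  shows "perm_conj r w p $$ (i, j) = 0"
proof -
  have wp: "w permutes {..<r}" using w by (simp add: S_rs_def)
  then have "w i < r" "w j < r" using ij permutes_in_image[OF wp] by auto
  then show ?thesis
    using S_rs_blk_less[OF w ij] p ij by (simp add: Pgrp_def perm_conj_def)
qed

lemma U_w_unitriangular:
  assumes "u \<in> U_w r w"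
  shows "u \<in> carrier_mat r r" and "\<forall>i<r. u $$ (i, i) = 1" and "\<forall>i<r. \<forall>j<r. i < j \<longrightarrow> u $$ (i, j) = 0"
  using assms by (auto simp: U_w_def)

lemma U_w_support:
  assumes "u \<in> U_w r w" and "i < r" "j < r" "i \<noteq> j" "u $$ (i, j) \<noteq> 0"
  shows "j < i \<and> w i < w j"
  using assms by (auto simp: U_w_def)

lemma intertwiner_of_unitriangular_eq_mat_diag:
  fixes X u :: "'a::comm_ring_1 mat"
  assumes u: "u \<in> carrier_mat r r" "\<forall>i<r. u $$ (i, i) = 1" "\<forall>i<r. \<forall>j<r. i < j \<longrightarrow> u $$ (i, j) = 0"
    and X: "X \<in> carrier_mat r r" and intertwines: "X * u = u * mat_diag r d"
    and vanishes: "\<forall>i<r. \<forall>j<r. j < i \<and> u $$ (i, j) \<noteq> 0 \<longrightarrow> X $$ (i, j) = 0"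
  shows "X = mat_diag r d"
proof -
  have column: "\<forall>i<r. X $$ (i, j) = mat_diag r d $$ (i, j)" if "j < r" for j
    using that
  proof (induction "r - j" arbitrary: j rule: less_induct)
    case less
    have IH: "X $$ (i, k) = mat_diag r d $$ (i, k)" if "i < r" "j < k" "k < r" for i k
      using less.hyps[of k] that by auto
    show ?case
    proof (intro allI impI)
      fix i assume i: "i < r"
      have "u $$ (i, j) * d j = (X * u) $$ (i, j)"
        using intertwines u(1) i less.prems by (simp add: mat_diag_mult_right)
      also have "\<dots> = (\<Sum>k\<in>{0..<r}. X $$ (i, k) * u $$ (k, j))"
        using X u(1) i less.prems by (simp add: scalar_prod_def)
      also have "\<dots> = (\<Sum>k\<in>{0..<r}. (if k = j then X $$ (i, j) else 0)
                        + (if k = i \<and> j < i then d i * u $$ (i, j) else 0))"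
      proof (rule sum.cong[OF refl])
        fix k assume k: "k \<in> {0..<r}"
        show "X $$ (i, k) * u $$ (k, j) = (if k = j then X $$ (i, j) else 0)
                + (if k = i \<and> j < i then d i * u $$ (i, j) else 0)"
        proof (cases k j rule: linorder_cases)
          case less
          then show ?thesis using u(3) k less.prems by auto
        next
          case equal
          then show ?thesis using u(2) less.prems by auto
        next
          case greater
          then show ?thesis using IH[OF i greater] i k by (auto simp: mat_diag_def)
        qed
      qed
      also have "\<dots> = X $$ (i, j) + (if j < i then d i * u $$ (i, j) else 0)"
        using i less.prems by (simp add: sum.distrib)
      finally have column_eq: "X $$ (i, j) + (if j < i then d i * u $$ (i, j) else 0) = u $$ (i, j) * d j" ..
      show "X $$ (i, j) = mat_diag r d $$ (i, j)"
      proof (cases "i = j")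
        case True
        then show ?thesis using column_eq u(2) i by (simp add: mat_diag_def)
      next
        case False
        then have "X $$ (i, j) = 0"
          using column_eq vanishes u(3) i less.prems by (cases "j < i"; cases "u $$ (i, j) = 0") auto
        then show ?thesis using False i less.prems by (simp add: mat_diag_def)
      qed
    qed
  qed
  show ?thesis
    using X column by (intro eq_matI) (auto simp: mat_diag_def)
qed

lemma stab_group_carrier_iff:
  fixes u :: "'a::field mat"
  assumes w: "w \<in> S_rs r s" and u: "u \<in> U_w r w"
  shows "(p, t) \<in> carrier (stab_group r s (perm_mat r w * u))
           \<longleftrightarrow> t \<in> CT_set r u \<and> p = perm_conj r (Hilbert_Choice.inv w) t"
proof -
  have wp: "w permutes {..<r}" using w by (simp add: S_rs_def)
  have uc: "u \<in> carrier_mat r r" using U_w_unitriangular(1)[OF u] .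
  have gc: "perm_mat r w * u \<in> carrier_mat r r" using mult_carrier_mat[OF perm_mat_carrier uc] .
  have stabilizes_iff: "p * (perm_mat r w * u) * diag_inv r t = perm_mat r w * u
      \<longleftrightarrow> perm_conj r w p * u = u * t" if p: "p \<in> carrier_mat r r" and t: "t \<in> Tor r" for p t
    using mult_diag_inv_eq_iff[OF t mult_carrier_mat[OF p gc] gc]
      perm_mat_stabilizer_iff[OF wp p uc Tor_carrier[OF t]] by simp
  show ?thesis
  proof
    assume "(p, t) \<in> carrier (stab_group r s (perm_mat r w * u))"
    then have p: "p \<in> Pgrp r s" and t: "t \<in> Tor r"
      and stab: "p * (perm_mat r w * u) * diag_inv r t = perm_mat r w * u"
      by (auto simp: stab_group_def)
    have pc: "p \<in> carrier_mat r r" using p by (simp add: Pgrp_def)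
    obtain d where td: "t = mat_diag r d" using TorE[OF t] .
    have "perm_conj r w p = t"
      unfolding td
    proof (rule intertwiner_of_unitriangular_eq_mat_diag[OF U_w_unitriangular[OF u] perm_conj_carrier])
      show "perm_conj r w p * u = u * mat_diag r d" using stabilizes_iff[OF pc t] stab td by simp
      show "\<forall>i<r. \<forall>j<r. j < i \<and> u $$ (i, j) \<noteq> 0 \<longrightarrow> perm_conj r w p $$ (i, j) = 0"
        using perm_conj_Pgrp_vanishes[OF w p] U_w_support[OF u] by auto
    qed
    moreover have "t * u = u * t"
      using stabilizes_iff[OF pc t] stab calculation by simp
    ultimately show "t \<in> CT_set r u \<and> p = perm_conj r (Hilbert_Choice.inv w) t"
      using t perm_conj_inv(2)[OF wp pc] by (simp add: CT_set_eq_commute[OF uc])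
  next
    assume "t \<in> CT_set r u \<and> p = perm_conj r (Hilbert_Choice.inv w) t"
    then have t: "t \<in> Tor r" and tu: "t * u = u * t" and p_def: "p = perm_conj r (Hilbert_Choice.inv w) t"
      by (auto simp: CT_set_eq_commute[OF uc])
    have "p \<in> Tor r" using perm_conj_Tor[OF permutes_inv[OF wp] t] p_def by simp
    then have "p \<in> Pgrp r s" using Tor_subset_Pgrp by blast
    moreover have "perm_conj r w p = t" using perm_conj_inv(1)[OF wp Tor_carrier[OF t]] p_def by simp
    ultimately show "(p, t) \<in> carrier (stab_group r s (perm_mat r w * u))"
      using stabilizes_iff[OF perm_conj_carrier t] t tu p_def
      by (simp add: stab_group_def)
  qed
qed

lemma stab_group_iso_CT_group:
  fixes u :: "'a::field mat"
  assumes w: "w \<in> S_rs r s" and u: "u \<in> U_w r w"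
  shows "snd \<in> iso (stab_group r s (perm_mat r w * u)) (CT_group r u)"
proof (rule isoI)
  note carrier_iff = stab_group_carrier_iff[OF w u]
  show "snd \<in> hom (stab_group r s (perm_mat r w * u)) (CT_group r u)"
  proof (rule homI)
    fix x assume "x \<in> carrier (stab_group r s (perm_mat r w * u))"
    then show "snd x \<in> carrier (CT_group r u)"
      by (cases x) (simp add: carrier_iff CT_group_def)
  next
    fix x y
    show "snd (x \<otimes>\<^bsub>stab_group r s (perm_mat r w * u)\<^esub> y) = snd x \<otimes>\<^bsub>CT_group r u\<^esub> snd y"
      by (cases x, cases y) (simp add: stab_group_def CT_group_def)
  qed
  show "bij_betw snd (carrier (stab_group r s (perm_mat r w * u))) (carrier (CT_group r u))"
    by (rule bij_betw_byWitness[where f' = "\<lambda>t. (perm_conj r (Hilbert_Choice.inv w) t, t)"])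
      (auto simp: carrier_iff CT_group_def)
qed

lemma CT_set_eq_Ker_roots:
  fixes u :: "'a::field mat"
  assumes w: "w \<in> S_rs r s" and u: "u \<in> U_w r w"
  shows "CT_set r u = {t \<in> Tor r. \<forall>i<r. \<forall>j<r.
           (j < i \<and> w i < w j \<and> blk s (w i) \<noteq> blk s (w j) \<and> u $$ (i,j) \<noteq> 0)
             \<longrightarrow> root_val i j t = 1}"
proof -
  have uc: "u \<in> carrier_mat r r" using U_w_unitriangular(1)[OF u] .
  have root_iff: "root_val i j t = 1 \<longleftrightarrow> t $$ (i,i) = t $$ (j,j)" if "t \<in> Tor r" "j < r" for t i j
    using that by (simp add: root_val_def Tor_def)
  have "t * u = u * t \<longleftrightarrow> (\<forall>i<r. \<forall>j<r.
           (j < i \<and> w i < w j \<and> blk s (w i) \<noteq> blk s (w j) \<and> u $$ (i,j) \<noteq> 0)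
             \<longrightarrow> root_val i j t = 1)" if t: "t \<in> Tor r" for t
    unfolding Tor_commute_iff[OF t uc]
    using root_iff[OF t] U_w_support[OF u] S_rs_blk_less[OF w] by (metis less_irrefl)
  then show ?thesis by (auto simp: CT_set_eq_commute[OF uc])
qed

theorem lemma3p4:
  fixes r :: nat and s :: "nat list" and w :: "nat \<Rightarrow> nat" and u :: "'a::field mat"
  assumes "r \<ge> 1" and "sum_list s = r"
    and "w \<in> S_rs r s" and "u \<in> U_w r w"
  shows "stab_group r s (perm_mat r w * u) \<cong> CT_group r u \<and>
     (CT_set r u = {t \<in> Tor r. \<forall>i<r. \<forall>j<r.
           (j < i \<and> w i < w j \<and> blk s (w i) \<noteq> blk s (w j) \<and> u $$ (i,j) \<noteq> 0)
             \<longrightarrow> root_val i j t = 1})"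
  (* the block structure enters only through the monotonicity of blk *)
proof
  show "stab_group r s (perm_mat r w * u) \<cong> CT_group r u"
    using stab_group_iso_CT_group[OF assms(3,4)] by (rule is_isoI)
  show "CT_set r u = {t \<in> Tor r. \<forall>i<r. \<forall>j<r.
           (j < i \<and> w i < w j \<and> blk s (w i) \<noteq> blk s (w j) \<and> u $$ (i,j) \<noteq> 0)
             \<longrightarrow> root_val i j t = 1}"
    using assms(3,4) by (rule CT_set_eq_Ker_roots)
qed

end
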